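(* Let $(M,g)$ be a semi-regular semi-Riemannian manifold with Riemann curvature $R$. For all $X,Y,Z,T\in\mathfrak X(M)$: (1) $R(X,Y,Z,T)=-R(Y,X,Z,T)$; (2) $R(X,Y,Z,T)=-R(X,Y,T,Z)$; (3) $R(Y,Z,X,T)+R(Z,X,Y,T)+R(X,Y,Z,T)=0$; (4) $R(X,Y,Z,T)=R(Z,T,X,Y)$.
   Context: $(M,g)$: smooth manifold with smooth symmetric, possibly degenerate, bilinear form $g$ on $TM$ (variable signature allowed). $u^\flat(v)=g(u,v)$; $T^\bullet_pM=\{u^\flat:u\in T_pM\}$ with nondegenerate inner product $\langle\langle u^\flat,v^\flat\rangle\rangle=g(u,v)$; $\mathcal A^\bullet(M)$ = smooth $1$-forms valued in $T^\bullet_pM$. Koszul form $\mathcal K(X,Y,Z)=\tfrac12\{Xg(Y,Z)+Yg(Z,X)-Zg(X,Y)-g(X,[Y,Z])+g(Y,[Z,X])+g(Z,[X,Y])\}$; $\nabla^\flat_XY:=\mathcal K(X,Y,\cdot)$. If $\nabla^\flat_XY\in\mathcal A^\bullet(M)$ for all $X,Y$ (radical-stationary), define for $\omega\in\mathcal A^\bullet(M)$: $(\nabla_X\omega)(Y)=X(\omega(Y))-\langle\langle\nabla^\flat_XY,\omega\rangle\rangle$. $(M,g)$ is semi-regular if it is radical-stationary and $\nabla_Z(\nabla^\flat_XY)\in\mathcal A^\bullet(M)$ (in particular smooth) for all $X,Y,Z$. Riemann curvature: $R(X,Y,Z,T)=(\nabla_X(\nabla^\flat_YZ))(T)-(\nabla_Y(\nabla^\flat_XZ))(T)-(\nabla^\flat_{[X,Y]}Z)(T)$.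 *)

theory Defs
  imports "HOL-Analysis.Analysis"
begin

coinductive Cinf :: "'e::euclidean_space set \<Rightarrow> ('e \<Rightarrow> real) \<Rightarrow> bool" for S where
  Cinf_intro: "(\<forall>x\<in>S. f differentiable (at x)) \<Longrightarrow>
     (\<forall>v. Cinf S (\<lambda>x. frechet_derivative f (at x) v)) \<Longrightarrow> Cinf S f"

definition Cinf_map :: "'e::euclidean_space set \<Rightarrow> ('e \<Rightarrow> 'e) \<Rightarrow> bool" where
  "Cinf_map S F \<longleftrightarrow> (\<forall>b\<in>Basis. Cinf S (\<lambda>x. F x \<bullet> b))"

definition smooth_manifold ::
  "'p topology \<Rightarrow> ('p set \<times> ('p \<Rightarrow> 'e::euclidean_space)) set \<Rightarrow> bool" where
  "smooth_manifold MT A \<longleftrightarrow>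
     Hausdorff_space MT \<and> second_countable MT \<and> topspace MT = \<Union>(fst ` A) \<and>
     (\<forall>(U,\<phi>)\<in>A. openin MT U \<and> open (\<phi> ` U) \<and>
        homeomorphic_map (subtopology MT U) (top_of_set (\<phi> ` U)) \<phi>) \<and>
     (\<forall>(U,\<phi>)\<in>A. \<forall>(V,\<psi>)\<in>A. Cinf_map (\<phi> ` (U \<inter> V)) (\<psi> \<circ> inv_into U \<phi>))"

text \<open>Smooth real functions on M (made extensional: zero outside M).\<close>
definition smooth_fun ::
  "'p topology \<Rightarrow> ('p set \<times> ('p \<Rightarrow> 'e::euclidean_space)) set \<Rightarrow> ('p \<Rightarrow> real) \<Rightarrow> bool" where
  "smooth_fun MT A f \<longleftrightarrow> (\<forall>p. p \<notin> topspace MT \<longrightarrow> f p = 0) \<and>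
     (\<forall>(U,\<phi>)\<in>A. Cinf (\<phi> ` U) (f \<circ> inv_into U \<phi>))"

type_synonym 'p vfield = "('p \<Rightarrow> real) \<Rightarrow> ('p \<Rightarrow> real)"

text \<open>Smooth vector fields, as derivations of the algebra of smooth functions
  (made extensional: zero on non-smooth arguments).\<close>
definition vector_field ::
  "'p topology \<Rightarrow> ('p set \<times> ('p \<Rightarrow> 'e::euclidean_space)) set \<Rightarrow> 'p vfield \<Rightarrow> bool" where
  "vector_field MT A X \<longleftrightarrow>
     (\<forall>f. \<not> smooth_fun MT A f \<longrightarrow> X f = (\<lambda>_. 0)) \<and>
     (\<forall>f. smooth_fun MT A f \<longrightarrow> smooth_fun MT A (X f)) \<and>
     (\<forall>f h a b. smooth_fun MT A f \<and> smooth_fun MT A h \<longrightarrow>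
        X (\<lambda>p. a * f p + b * h p) = (\<lambda>p. a * X f p + b * X h p)) \<and>
     (\<forall>f h. smooth_fun MT A f \<and> smooth_fun MT A h \<longrightarrow>
        X (\<lambda>p. f p * h p) = (\<lambda>p. f p * X h p + h p * X f p))"

definition vf_comb :: "('p \<Rightarrow> real) \<Rightarrow> 'p vfield \<Rightarrow> ('p \<Rightarrow> real) \<Rightarrow> 'p vfield \<Rightarrow> 'p vfield" where
  "vf_comb f X h Y = (\<lambda>u p. f p * X u p + h p * Y u p)"

definition lie :: "'p vfield \<Rightarrow> 'p vfield \<Rightarrow> 'p vfield" where
  "lie X Y = (\<lambda>u p. X (Y u) p - Y (X u) p)"

text \<open>A smooth symmetric, possibly degenerate, bilinear form on TM, given as a
  symmetric C-infinity(M)-bilinear map from pairs of vector fields to smooth functions.\<close>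
definition sym_bilinear_form ::
  "'p topology \<Rightarrow> ('p set \<times> ('p \<Rightarrow> 'e::euclidean_space)) set \<Rightarrow>
   ('p vfield \<Rightarrow> 'p vfield \<Rightarrow> 'p \<Rightarrow> real) \<Rightarrow> bool" where
  "sym_bilinear_form MT A g \<longleftrightarrow>
     (\<forall>X Y. vector_field MT A X \<and> vector_field MT A Y \<longrightarrow>
        smooth_fun MT A (g X Y) \<and> g X Y = g Y X) \<and>
     (\<forall>X Y Z f h. vector_field MT A X \<and> vector_field MT A Y \<and> vector_field MT A Z \<and>
        smooth_fun MT A f \<and> smooth_fun MT A h \<longrightarrow>
        g (vf_comb f X h Y) Z = (\<lambda>p. f p * g X Z p + h p * g Y Z p))"

text \<open>Koszul form; nabla-flat_X Y := K(X,Y,.)\<close>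
definition koszul ::
  "('p vfield \<Rightarrow> 'p vfield \<Rightarrow> 'p \<Rightarrow> real) \<Rightarrow> 'p vfield \<Rightarrow> 'p vfield \<Rightarrow> 'p vfield \<Rightarrow> 'p \<Rightarrow> real" where
  "koszul g X Y Z = (\<lambda>p. (1/2) * (X (g Y Z) p + Y (g Z X) p - Z (g X Y) p
      - g X (lie Y Z) p + g Y (lie Z X) p + g Z (lie X Y) p))"

text \<open>A 1-form (a map from vector fields to functions) lies in A-bullet(M): it is
  smooth, C-infinity(M)-linear, and at each point p its value is u-flat for some
  tangent vector u at p (represented as the value at p of a vector field).\<close>
definition Abullet ::
  "'p topology \<Rightarrow> ('p set \<times> ('p \<Rightarrow> 'e::euclidean_space)) set \<Rightarrow>
   ('p vfield \<Rightarrow> 'p vfield \<Rightarrow> 'p \<Rightarrow> real) \<Rightarrow> ('p vfield \<Rightarrow> 'p \<Rightarrow> real) \<Rightarrow> bool" where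
  "Abullet MT A g \<omega> \<longleftrightarrow>
     (\<forall>Z. vector_field MT A Z \<longrightarrow> smooth_fun MT A (\<omega> Z)) \<and>
     (\<forall>Z W f h. vector_field MT A Z \<and> vector_field MT A W \<and>
        smooth_fun MT A f \<and> smooth_fun MT A h \<longrightarrow>
        \<omega> (vf_comb f Z h W) = (\<lambda>p. f p * \<omega> Z p + h p * \<omega> W p)) \<and>
     (\<forall>p\<in>topspace MT. \<exists>U. vector_field MT A U \<and>
        (\<forall>Z. vector_field MT A Z \<longrightarrow> \<omega> Z p = g U Z p))"

definition flat_rep ::
  "'p topology \<Rightarrow> ('p set \<times> ('p \<Rightarrow> 'e::euclidean_space)) set \<Rightarrow>
   ('p vfield \<Rightarrow> 'p vfield \<Rightarrow> 'p \<Rightarrow> real) \<Rightarrow> ('p vfield \<Rightarrow> 'p \<Rightarrow> real) \<Rightarrow> 'p \<Rightarrow> 'p vfield" where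
  "flat_rep MT A g \<omega> p = (SOME U. vector_field MT A U \<and>
      (\<forall>Z. vector_field MT A Z \<longrightarrow> \<omega> Z p = g U Z p))"

text \<open>The inner product on T-bullet: << u-flat, v-flat >> = g(u,v), pointwise.\<close>
definition bullet_inner ::
  "'p topology \<Rightarrow> ('p set \<times> ('p \<Rightarrow> 'e::euclidean_space)) set \<Rightarrow>
   ('p vfield \<Rightarrow> 'p vfield \<Rightarrow> 'p \<Rightarrow> real) \<Rightarrow> ('p vfield \<Rightarrow> 'p \<Rightarrow> real) \<Rightarrow>
   ('p vfield \<Rightarrow> 'p \<Rightarrow> real) \<Rightarrow> 'p \<Rightarrow> real" where
  "bullet_inner MT A g \<omega> \<tau> = (\<lambda>p. if p \<in> topspace MT
      then g (flat_rep MT A g \<omega> p) (flat_rep MT A g \<tau> p) p else 0)"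

definition nabla_form ::
  "'p topology \<Rightarrow> ('p set \<times> ('p \<Rightarrow> 'e::euclidean_space)) set \<Rightarrow>
   ('p vfield \<Rightarrow> 'p vfield \<Rightarrow> 'p \<Rightarrow> real) \<Rightarrow> 'p vfield \<Rightarrow> ('p vfield \<Rightarrow> 'p \<Rightarrow> real) \<Rightarrow>
   'p vfield \<Rightarrow> 'p \<Rightarrow> real" where
  "nabla_form MT A g X \<omega> Y = (\<lambda>p. X (\<omega> Y) p - bullet_inner MT A g (koszul g X Y) \<omega> p)"

definition radical_stationary ::
  "'p topology \<Rightarrow> ('p set \<times> ('p \<Rightarrow> 'e::euclidean_space)) set \<Rightarrow>
   ('p vfield \<Rightarrow> 'p vfield \<Rightarrow> 'p \<Rightarrow> real) \<Rightarrow> bool" where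
  "radical_stationary MT A g \<longleftrightarrow>
     (\<forall>X Y. vector_field MT A X \<and> vector_field MT A Y \<longrightarrow> Abullet MT A g (koszul g X Y))"

definition semi_regular ::
  "'p topology \<Rightarrow> ('p set \<times> ('p \<Rightarrow> 'e::euclidean_space)) set \<Rightarrow>
   ('p vfield \<Rightarrow> 'p vfield \<Rightarrow> 'p \<Rightarrow> real) \<Rightarrow> bool" where
  "semi_regular MT A g \<longleftrightarrow> radical_stationary MT A g \<and>
     (\<forall>X Y Z. vector_field MT A X \<and> vector_field MT A Y \<and> vector_field MT A Z \<longrightarrow>
        Abullet MT A g (nabla_form MT A g Z (koszul g X Y)))"

definition riemann ::
  "'p topology \<Rightarrow> ('p set \<times> ('p \<Rightarrow> 'e::euclidean_space)) set \<Rightarrow>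
   ('p vfield \<Rightarrow> 'p vfield \<Rightarrow> 'p \<Rightarrow> real) \<Rightarrow> 'p vfield \<Rightarrow> 'p vfield \<Rightarrow> 'p vfield \<Rightarrow> 'p vfield \<Rightarrow> 'p \<Rightarrow> real" where
  "riemann MT A g X Y Z T = (\<lambda>p. nabla_form MT A g X (koszul g Y Z) T p
      - nabla_form MT A g Y (koszul g X Z) T p - koszul g (lie X Y) Z T p)"

end

theory Submission
  imports Defs
begin

(* The curvature is expressed through the Koszul form K alone:
   R(X,Y,Z,T) = X K(Y,Z,T) - <<K(X,T,-), K(Y,Z,-)>> - Y K(X,Z,T) + <<K(Y,T,-), K(X,Z,-)>> - K([X,Y],Z,T).
   Two identities of K do all the work: K(X,Y,Z) + K(X,Z,Y) = X g(Y,Z) (metric) and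
   K(X,Y,Z) - K(Y,X,Z) = g([X,Y],Z) (torsion-free), together with the symmetry of <<-,->> and
   <<omega, W-flat>> = omega(W). Antisymmetry in X,Y is that of the bracket; antisymmetry in Z,T is
   the metric identity; in the cyclic sum the torsion identity turns the terms differentiated by X
   into g([X,[Y,Z]],T), so the sum vanishes by the Jacobi identity; pair symmetry is the usual
   algebraic consequence of the first three. *)

(* The derivative of a product is a sum of products, so closure of Cinf S under sums and products
   is proved by coinduction up to the algebra generated by Cinf S. *)
inductive Cinf_alg :: "'e::euclidean_space set \<Rightarrow> ('e \<Rightarrow> real) \<Rightarrow> bool" for S where
  Cinf_alg_Cinf: "Cinf S f \<Longrightarrow> Cinf_alg S f"
| Cinf_alg_add: "Cinf_alg S f \<Longrightarrow> Cinf_alg S h \<Longrightarrow> Cinf_alg S (\<lambda>x. f x + h x)"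
| Cinf_alg_mult: "Cinf_alg S f \<Longrightarrow> Cinf_alg S h \<Longrightarrow> Cinf_alg S (\<lambda>x. f x * h x)"
| Cinf_alg_cong: "Cinf_alg S f \<Longrightarrow> (\<And>x. x \<in> S \<Longrightarrow> h x = f x) \<Longrightarrow> Cinf_alg S h"

lemma Cinf_alg_derivative:
  assumes "open S" and "Cinf_alg S f"
  shows "(\<forall>x\<in>S. f differentiable (at x)) \<and> (\<forall>v. Cinf_alg S (\<lambda>x. frechet_derivative f (at x) v))"
  using assms(2)
proof induction
  case (Cinf_alg_Cinf f)
  then show ?case by (auto elim: Cinf.cases intro: Cinf_alg.Cinf_alg_Cinf)
next
  case (Cinf_alg_add f h)
  have "frechet_derivative (\<lambda>x. f x + h x) (at x) v
      = frechet_derivative f (at x) v + frechet_derivative h (at x) v" if "x \<in> S" for x v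
  proof -
    have "((\<lambda>x. f x + h x) has_derivative
        (\<lambda>v. frechet_derivative f (at x) v + frechet_derivative h (at x) v)) (at x)"
      using Cinf_alg_add.IH that by (intro has_derivative_add) (auto simp: frechet_derivative_works[symmetric])
    then show ?thesis by (simp add: frechet_derivative_at[symmetric])
  qed
  moreover have "Cinf_alg S (\<lambda>x. frechet_derivative f (at x) v + frechet_derivative h (at x) v)" for v
    using Cinf_alg_add.IH by (intro Cinf_alg.Cinf_alg_add) blast+
  ultimately show ?case
    using Cinf_alg_add.IH by (auto intro: differentiable_add Cinf_alg.Cinf_alg_cong)
next
  case (Cinf_alg_mult f h)
  have "frechet_derivative (\<lambda>x. f x * h x) (at x) v
      = f x * frechet_derivative h (at x) v + frechet_derivative f (at x) v * h x" if "x \<in> S" for x v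
  proof -
    have "((\<lambda>x. f x * h x) has_derivative
        (\<lambda>v. f x * frechet_derivative h (at x) v + frechet_derivative f (at x) v * h x)) (at x)"
      using Cinf_alg_mult.IH that by (intro has_derivative_mult) (auto simp: frechet_derivative_works[symmetric])
    then show ?thesis by (simp add: frechet_derivative_at[symmetric])
  qed
  moreover have
    "Cinf_alg S (\<lambda>x. f x * frechet_derivative h (at x) v + frechet_derivative f (at x) v * h x)" for v
    using Cinf_alg_mult.IH Cinf_alg_mult.hyps
    by (intro Cinf_alg.Cinf_alg_add Cinf_alg.Cinf_alg_mult) blast+
  ultimately show ?case
    using Cinf_alg_mult.IH by (auto intro: differentiable_mult Cinf_alg.Cinf_alg_cong)
next
  case (Cinf_alg_cong f h)
  have "h differentiable (at x) \<and> frechet_derivative h (at x) = frechet_derivative f (at x)"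
    if "x \<in> S" for x
  proof -
    have "(f has_derivative frechet_derivative f (at x)) (at x)"
      using Cinf_alg_cong.IH that frechet_derivative_works by blast
    then have "(h has_derivative frechet_derivative f (at x)) (at x)"
      by (rule has_derivative_transform_within_open) (use assms(1) that Cinf_alg_cong.hyps(2) in auto)
    then show ?thesis
      using frechet_derivative_at differentiableI by metis
  qed
  with Cinf_alg_cong.IH show ?case
    by (auto intro: Cinf_alg.Cinf_alg_cong)
qed

lemma Cinf_alg_imp_Cinf:
  assumes "open S" and "Cinf_alg S f"
  shows "Cinf S f"
  using assms(2)
proof (coinduction arbitrary: f rule: Cinf.coinduct)
  case (Cinf f)
  then show ?case using Cinf_alg_derivative[OF assms(1)] by blast
qed

lemma Cinf_const: "Cinf S (\<lambda>x. c)"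
  by (coinduction arbitrary: c rule: Cinf.coinduct) auto

locale manifold =
  fixes MT :: "'p topology" and A :: "('p set \<times> ('p \<Rightarrow> 'e::euclidean_space)) set"
  assumes smooth_manifold: "smooth_manifold MT A"
begin

abbreviation "smooth \<equiv> smooth_fun MT A"
abbreviation "vf \<equiv> vector_field MT A"

lemma chart_open: "(U, \<phi>) \<in> A \<Longrightarrow> open (\<phi> ` U)"
  using smooth_manifold unfolding smooth_manifold_def by blast

lemma chart_subset: "(U, \<phi>) \<in> A \<Longrightarrow> U \<subseteq> topspace MT"
  using smooth_manifold unfolding smooth_manifold_def by (auto dest: openin_subset)

lemma smooth_funI:
  assumes "\<And>p. p \<notin> topspace MT \<Longrightarrow> f p = 0"
    and "\<And>U \<phi>. (U, \<phi>) \<in> A \<Longrightarrow> Cinf_alg (\<phi> ` U) (f \<circ> inv_into U \<phi>)"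
  shows "smooth f"
  unfolding smooth_fun_def using assms(1) by (auto intro!: Cinf_alg_imp_Cinf chart_open assms(2))

lemma smooth_fun_chart: "smooth f \<Longrightarrow> (U, \<phi>) \<in> A \<Longrightarrow> Cinf_alg (\<phi> ` U) (f \<circ> inv_into U \<phi>)"
  unfolding smooth_fun_def by (auto intro: Cinf_alg_Cinf)

lemma smooth_fun_outside: "smooth f \<Longrightarrow> p \<notin> topspace MT \<Longrightarrow> f p = 0"
  unfolding smooth_fun_def by blast

lemma smooth_fun_zero: "smooth (\<lambda>_. 0)"
  unfolding smooth_fun_def by (auto simp: o_def Cinf_const)

lemma smooth_fun_lincomb:
  assumes "smooth f" and "smooth h"
  shows "smooth (\<lambda>p. a * f p + b * h p)"
proof (rule smooth_funI)
  fix U \<phi> assume "(U, \<phi>) \<in> A"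
  then have "Cinf_alg (\<phi> ` U)
      (\<lambda>y. (\<lambda>_. a) y * (f \<circ> inv_into U \<phi>) y + (\<lambda>_. b) y * (h \<circ> inv_into U \<phi>) y)"
    using assms by (intro Cinf_alg_add Cinf_alg_mult Cinf_alg_Cinf Cinf_const smooth_fun_chart)
  then show "Cinf_alg (\<phi> ` U) ((\<lambda>p. a * f p + b * h p) \<circ> inv_into U \<phi>)"
    by (simp add: o_def)
qed (simp add: smooth_fun_outside[OF assms(1)] smooth_fun_outside[OF assms(2)])

lemma smooth_fun_mult:
  assumes "smooth f" and "smooth h"
  shows "smooth (\<lambda>p. f p * h p)"
proof (rule smooth_funI)
  fix U \<phi> assume "(U, \<phi>) \<in> A"
  then have "Cinf_alg (\<phi> ` U) (\<lambda>y. (f \<circ> inv_into U \<phi>) y * (h \<circ> inv_into U \<phi>) y)"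
    using assms by (intro Cinf_alg_mult smooth_fun_chart)
  then show "Cinf_alg (\<phi> ` U) ((\<lambda>p. f p * h p) \<circ> inv_into U \<phi>)"
    by (simp add: o_def)
qed (simp add: smooth_fun_outside[OF assms(1)])

lemma smooth_fun_indicator: "smooth (indicator (topspace MT))"
proof (rule smooth_funI)
  fix U \<phi> assume chart: "(U, \<phi>) \<in> A"
  have "indicator (topspace MT) (inv_into U \<phi> y) = (1::real)" if "y \<in> \<phi> ` U" for y
    using inv_into_into[OF that] chart_subset[OF chart] by auto
  then show "Cinf_alg (\<phi> ` U) (indicator (topspace MT) \<circ> inv_into U \<phi>)"
    by (intro Cinf_alg_cong[OF Cinf_alg_Cinf[OF Cinf_const[of _ 1]]]) simp
qed simp

lemma vf_smooth: "vf X \<Longrightarrow> smooth f \<Longrightarrow> smooth (X f)"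
  unfolding vector_field_def by blast

lemma vf_nonsmooth: "vf X \<Longrightarrow> \<not> smooth f \<Longrightarrow> X f = (\<lambda>_. 0)"
  unfolding vector_field_def by blast

lemma vf_linear:
  "vf X \<Longrightarrow> smooth f \<Longrightarrow> smooth h \<Longrightarrow> X (\<lambda>p. a * f p + b * h p) = (\<lambda>p. a * X f p + b * X h p)"
  unfolding vector_field_def by blast

lemma vf_Leibniz:
  "vf X \<Longrightarrow> smooth f \<Longrightarrow> smooth h \<Longrightarrow> X (\<lambda>p. f p * h p) = (\<lambda>p. f p * X h p + h p * X f p)"
  unfolding vector_field_def by blast

lemma vf_zero: "vf X \<Longrightarrow> X (\<lambda>_. 0) = (\<lambda>_. 0)"
  using vf_linear[OF _ smooth_fun_zero smooth_fun_zero, of X 0 0] by simp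

lemma vf_add: "vf X \<Longrightarrow> smooth f \<Longrightarrow> smooth h \<Longrightarrow> X (\<lambda>p. f p + h p) = (\<lambda>p. X f p + X h p)"
  using vf_linear[of X f h 1 1] by simp

lemma vf_diff: "vf X \<Longrightarrow> smooth f \<Longrightarrow> smooth h \<Longrightarrow> X (\<lambda>p. f p - h p) = (\<lambda>p. X f p - X h p)"
  using vf_linear[of X f h 1 "-1"] by simp

lemma vf_uminus: "vf X \<Longrightarrow> smooth f \<Longrightarrow> X (\<lambda>p. - f p) = (\<lambda>p. - X f p)"
  using vf_linear[of X f f "-1" 0] by simp

lemma vf_outside:
  assumes X: "vf X" and "p \<notin> topspace MT"
  shows "X u p = 0"
proof (cases "smooth u")
  case True
  show ?thesis by (rule smooth_fun_outside[OF vf_smooth[OF X True] assms(2)])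
qed (simp add: vf_nonsmooth[OF X])

lemma vector_field_lie:
  assumes X: "vf X" and Y: "vf Y"
  shows "vf (lie X Y)"
  unfolding vector_field_def
proof (intro conjI allI impI)
  fix f assume "\<not> smooth f"
  then show "lie X Y f = (\<lambda>_. 0)"
    by (simp add: lie_def vf_nonsmooth[OF X] vf_nonsmooth[OF Y] vf_zero[OF X] vf_zero[OF Y])
next
  fix f assume "smooth f"
  then show "smooth (lie X Y f)"
    unfolding lie_def
    by (intro smooth_fun_lincomb[of _ _ 1 "-1", simplified] vf_smooth[OF X] vf_smooth[OF Y])
next
  fix f h a b assume "smooth f \<and> smooth h"
  with X Y show "lie X Y (\<lambda>p. a * f p + b * h p) = (\<lambda>p. a * lie X Y f p + b * lie X Y h p)"
    by (simp add: lie_def vf_linear vf_smooth[OF X] vf_smooth[OF Y] algebra_simps)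
next
  fix f h assume "smooth f \<and> smooth h"
  then have f: "smooth f" and h: "smooth h" by auto
  have "V (W (\<lambda>p. f p * h p)) =
      (\<lambda>p. f p * V (W h) p + W h p * V f p + (h p * V (W f) p + W f p * V h p))"
    if V: "vf V" and W: "vf W" for V W
  proof -
    have "smooth (\<lambda>p. f p * W h p)" and "smooth (\<lambda>p. h p * W f p)"
      using f h by (simp_all add: smooth_fun_mult vf_smooth[OF W])
    then show ?thesis
      by (simp add: vf_Leibniz[OF W f h] vf_add[OF V] vf_Leibniz[OF V f vf_smooth[OF W h]]
          vf_Leibniz[OF V h vf_smooth[OF W f]])
  qed
  from this[OF X Y] this[OF Y X]
  show "lie X Y (\<lambda>p. f p * h p) = (\<lambda>p. f p * lie X Y h p + h p * lie X Y f p)"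
    unfolding lie_def by (simp add: algebra_simps)
qed

lemma vector_field_lincomb:
  assumes X: "vf X" and Y: "vf Y"
  shows "vf (\<lambda>u p. a * X u p + b * Y u p)"
  unfolding vector_field_def
proof (intro conjI allI impI)
  fix f assume "\<not> smooth f"
  with X Y show "(\<lambda>p. a * X f p + b * Y f p) = (\<lambda>_. 0)"
    by (simp add: vf_nonsmooth[OF X] vf_nonsmooth[OF Y])
next
  fix f assume "smooth f"
  with X Y show "smooth (\<lambda>p. a * X f p + b * Y f p)"
    by (simp add: smooth_fun_lincomb vf_smooth[OF X] vf_smooth[OF Y])
next
  fix f h c d assume "smooth f \<and> smooth h"
  with X Y show "(\<lambda>p. a * X (\<lambda>p. c * f p + d * h p) p + b * Y (\<lambda>p. c * f p + d * h p) p)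
      = (\<lambda>p. c * (a * X f p + b * Y f p) + d * (a * X h p + b * Y h p))"
    by (simp add: vf_linear algebra_simps)
next
  fix f h assume "smooth f \<and> smooth h"
  with X Y show "(\<lambda>p. a * X (\<lambda>p. f p * h p) p + b * Y (\<lambda>p. f p * h p) p)
      = (\<lambda>p. f p * (a * X h p + b * Y h p) + h p * (a * X f p + b * Y f p))"
    by (simp add: vf_Leibniz algebra_simps)
qed

lemma vector_field_add: "vf X \<Longrightarrow> vf Y \<Longrightarrow> vf (\<lambda>u p. X u p + Y u p)"
  using vector_field_lincomb[of X Y 1 1] by simp

lemma vector_field_uminus: "vf X \<Longrightarrow> vf (\<lambda>u p. - X u p)"
  using vector_field_lincomb[of X X "-1" 0] by simp

lemma lie_anticomm: "lie Y X = (\<lambda>u p. - lie X Y u p)"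
  by (simp add: lie_def)

lemma lie_uminus_left:
  assumes W: "vf W" and Z: "vf Z"
  shows "lie (\<lambda>u p. - W u p) Z = (\<lambda>u p. - lie W Z u p)"
proof (intro ext)
  fix u p
  show "lie (\<lambda>u p. - W u p) Z u p = - lie W Z u p"
    using assms by (cases "smooth u")
      (simp_all add: lie_def vf_uminus vf_smooth[OF W] vf_smooth[OF Z] vf_nonsmooth[OF W] vf_zero)
qed

lemma lie_uminus_right:
  assumes W: "vf W" and Z: "vf Z"
  shows "lie Z (\<lambda>u p. - W u p) = (\<lambda>u p. - lie Z W u p)"
proof (intro ext)
  fix u p
  show "lie Z (\<lambda>u p. - W u p) u p = - lie Z W u p"
    using assms by (cases "smooth u")
      (simp_all add: lie_def vf_uminus vf_smooth[OF W] vf_smooth[OF Z] vf_nonsmooth[OF W] vf_zero)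
qed

lemma lie_jacobi:
  assumes X: "vf X" and Y: "vf Y" and Z: "vf Z"
  shows "lie X (lie Y Z) u p + lie Y (lie Z X) u p + lie Z (lie X Y) u p = 0"
proof (cases "smooth u")
  case True
  with X Y Z show ?thesis
    by (simp add: lie_def vf_diff vf_smooth[OF X] vf_smooth[OF Y] vf_smooth[OF Z])
next
  case False
  with X Y Z show ?thesis
    by (simp add: vf_nonsmooth[OF vector_field_lie[OF X vector_field_lie[OF Y Z]]]
        vf_nonsmooth[OF vector_field_lie[OF Y vector_field_lie[OF Z X]]]
        vf_nonsmooth[OF vector_field_lie[OF Z vector_field_lie[OF X Y]]])
qed

end

locale metric_manifold = manifold MT A
  for MT :: "'p topology" and A :: "('p set \<times> ('p \<Rightarrow> 'e::euclidean_space)) set" +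
  fixes g :: "'p vfield \<Rightarrow> 'p vfield \<Rightarrow> 'p \<Rightarrow> real"
  assumes sym_bilinear_form: "sym_bilinear_form MT A g"
begin

lemma g_sym: "vf X \<Longrightarrow> vf Y \<Longrightarrow> g X Y = g Y X"
  using sym_bilinear_form unfolding sym_bilinear_form_def by blast

lemma g_smooth: "vf X \<Longrightarrow> vf Y \<Longrightarrow> smooth (g X Y)"
  using sym_bilinear_form unfolding sym_bilinear_form_def by blast

lemma g_comb:
  "vf X \<Longrightarrow> vf Y \<Longrightarrow> vf Z \<Longrightarrow> smooth f \<Longrightarrow> smooth h \<Longrightarrow>
    g (vf_comb f X h Y) Z = (\<lambda>p. f p * g X Z p + h p * g Y Z p)"
  using sym_bilinear_form unfolding sym_bilinear_form_def by blast

lemma g_lincomb: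
  assumes W: "vf W" and V: "vf V" and Z: "vf Z"
  shows "g (\<lambda>u p. a * W u p + b * V u p) Z = (\<lambda>p. a * g W Z p + b * g V Z p)"
proof -
  \<comment> \<open>Smooth functions vanish off M, so the constants enter as multiples of its indicator.\<close>
  define a' b' where "a' = (\<lambda>p. a * indicator (topspace MT) p)"
    and "b' = (\<lambda>p. b * indicator (topspace MT) p)"
  have smooth: "smooth a'" "smooth b'"
    using smooth_fun_lincomb[OF smooth_fun_indicator smooth_fun_indicator, of _ 0]
    by (simp_all add: a'_def b'_def)
  have comb: "vf_comb a' W b' V = (\<lambda>u p. a * W u p + b * V u p)"
  proof (intro ext)
    fix u p
    show "vf_comb a' W b' V u p = a * W u p + b * V u p"
      by (cases "p \<in> topspace MT")
        (simp_all add: vf_comb_def a'_def b'_def vf_outside[OF W] vf_outside[OF V])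
  qed
  have "g (vf_comb a' W b' V) Z = (\<lambda>p. a' p * g W Z p + b' p * g V Z p)"
    by (rule g_comb[OF W V Z smooth])
  also have "\<dots> = (\<lambda>p. a * g W Z p + b * g V Z p)"
  proof (intro ext)
    fix p
    show "a' p * g W Z p + b' p * g V Z p = a * g W Z p + b * g V Z p"
      using smooth_fun_outside[OF g_smooth[OF W Z]] smooth_fun_outside[OF g_smooth[OF V Z]]
      by (cases "p \<in> topspace MT") (simp_all add: a'_def b'_def)
  qed
  finally show ?thesis unfolding comb .
qed

lemma g_add_left:
  "vf W \<Longrightarrow> vf V \<Longrightarrow> vf Z \<Longrightarrow> g (\<lambda>u p. W u p + V u p) Z = (\<lambda>p. g W Z p + g V Z p)"
  using g_lincomb[of W V Z 1 1] by simp

lemma g_zero_left: "vf Z \<Longrightarrow> g (\<lambda>u p. 0) Z = (\<lambda>p. 0)"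
  using g_lincomb[of Z Z Z 0 0] by simp

lemma g_uminus_left: "vf W \<Longrightarrow> vf Z \<Longrightarrow> g (\<lambda>u p. - W u p) Z = (\<lambda>p. - g W Z p)"
  using g_lincomb[of W W Z "-1" 0] by simp

lemma g_uminus_right: "vf W \<Longrightarrow> vf Z \<Longrightarrow> g Z (\<lambda>u p. - W u p) = (\<lambda>p. - g Z W p)"
  using g_uminus_left g_sym vector_field_uminus by metis

lemma g_lie_anticomm:
  assumes "vf X" and "vf Y" and "vf Z"
  shows "g Z (lie Y X) = (\<lambda>p. - g Z (lie X Y) p)"
  unfolding lie_anticomm[of Y X] using assms by (simp add: g_uminus_right vector_field_lie)

lemma koszul_metric:
  assumes X: "vf X" and Y: "vf Y" and Z: "vf Z"
  shows "koszul g X Y Z p + koszul g X Z Y p = X (g Y Z) p"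
  by (simp add: koszul_def g_sym[OF Z Y] g_sym[OF Y X] g_sym[OF X Z]
      g_lie_anticomm[OF Y Z X] g_lie_anticomm[OF Z X Y] g_lie_anticomm[OF X Y Z] field_simps)

lemma koszul_torsion:
  assumes X: "vf X" and Y: "vf Y" and Z: "vf Z"
  shows "koszul g X Y Z p - koszul g Y X Z p = g (lie X Y) Z p"
  by (simp add: koszul_def g_sym[OF Z Y] g_sym[OF Y X] g_sym[OF X Z]
      g_sym[OF vector_field_lie[OF X Y] Z] g_lie_anticomm[OF Y Z X] g_lie_anticomm[OF Z X Y] g_lie_anticomm[OF X Y Z] field_simps)

lemma koszul_uminus:
  assumes W: "vf W" and Z: "vf Z" and T: "vf T"
  shows "koszul g (\<lambda>u p. - W u p) Z T p = - koszul g W Z T p"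
  using assms vector_field_lie[OF T W] vector_field_lie[OF W Z] vector_field_lie[OF Z T]
  by (simp add: koszul_def lie_uminus_left[OF W Z] lie_uminus_right[OF W T]
      g_uminus_left g_uminus_right vf_uminus[OF Z g_smooth[OF T W]] vf_uminus[OF T g_smooth[OF W Z]]
      field_simps)

lemma g_jacobi:
  assumes X: "vf X" and Y: "vf Y" and Z: "vf Z" and T: "vf T"
  shows "g (lie X (lie Y Z)) T p + g (lie Y (lie Z X)) T p + g (lie Z (lie X Y)) T p = 0"
proof -
  have vf: "vf (lie X (lie Y Z))" "vf (lie Y (lie Z X))" "vf (lie Z (lie X Y))"
    using X Y Z by (simp_all add: vector_field_lie)
  have "(\<lambda>u p. lie X (lie Y Z) u p + lie Y (lie Z X) u p + lie Z (lie X Y) u p) = (\<lambda>u p. 0)"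
    using lie_jacobi[OF X Y Z] by simp
  then have "g (\<lambda>u p. lie X (lie Y Z) u p + lie Y (lie Z X) u p + lie Z (lie X Y) u p) T p = 0"
    by (simp add: g_zero_left[OF T])
  then show ?thesis
    by (simp add: g_add_left vector_field_add vf T)
qed

lemma Abullet_smooth: "Abullet MT A g \<omega> \<Longrightarrow> vf Z \<Longrightarrow> smooth (\<omega> Z)"
  unfolding Abullet_def by blast

lemma flat_rep_represents:
  assumes "Abullet MT A g \<omega>" and "p \<in> topspace MT"
  shows "vf (flat_rep MT A g \<omega> p) \<and> (\<forall>Z. vf Z \<longrightarrow> \<omega> Z p = g (flat_rep MT A g \<omega> p) Z p)"
proof -
  have "\<exists>U. vf U \<and> (\<forall>Z. vf Z \<longrightarrow> \<omega> Z p = g U Z p)"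
    using assms unfolding Abullet_def by blast
  then show ?thesis unfolding flat_rep_def by (rule someI_ex)
qed

lemma bullet_inner_eq:
  assumes "Abullet MT A g \<omega>" and "Abullet MT A g \<tau>" and "p \<in> topspace MT"
  shows "bullet_inner MT A g \<omega> \<tau> p = \<tau> (flat_rep MT A g \<omega> p) p"
  using flat_rep_represents[OF assms(1,3)] flat_rep_represents[OF assms(2,3)] assms(3) g_sym
  by (simp add: bullet_inner_def)

lemma bullet_inner_commute:
  assumes "Abullet MT A g \<omega>" and "Abullet MT A g \<tau>"
  shows "bullet_inner MT A g \<omega> \<tau> p = bullet_inner MT A g \<tau> \<omega> p"
  using flat_rep_represents[OF assms(1)] flat_rep_represents[OF assms(2)] g_sym
  by (cases "p \<in> topspace MT") (simp_all add: bullet_inner_def)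

lemma bullet_inner_diff_flat:
  assumes \<omega>: "Abullet MT A g \<omega>" and \<tau>: "Abullet MT A g \<tau>" and \<tau>': "Abullet MT A g \<tau>'"
    and W: "vf W" and flat: "\<And>V. vf V \<Longrightarrow> \<tau> V p - \<tau>' V p = g W V p"
  shows "bullet_inner MT A g \<omega> \<tau> p - bullet_inner MT A g \<omega> \<tau>' p = \<omega> W p"
proof (cases "p \<in> topspace MT")
  case True
  note rep = flat_rep_represents[OF \<omega> True]
  have "bullet_inner MT A g \<omega> \<tau> p - bullet_inner MT A g \<omega> \<tau>' p
      = \<tau> (flat_rep MT A g \<omega> p) p - \<tau>' (flat_rep MT A g \<omega> p) p"
    using bullet_inner_eq[OF \<omega> \<tau> True] bullet_inner_eq[OF \<omega> \<tau>' True] by simp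
  also have "\<dots> = g (flat_rep MT A g \<omega> p) W p"
    using flat rep g_sym[OF W] by simp
  also have "\<dots> = \<omega> W p"
    using rep W by simp
  finally show ?thesis .
next
  case False
  then show ?thesis
    using smooth_fun_outside[OF Abullet_smooth[OF \<omega> W]] by (simp add: bullet_inner_def)
qed

lemma riemann_expand:
  "riemann MT A g X Y Z T p =
    X (koszul g Y Z T) p - bullet_inner MT A g (koszul g X T) (koszul g Y Z) p
    - (Y (koszul g X Z T) p - bullet_inner MT A g (koszul g Y T) (koszul g X Z) p)
    - koszul g (lie X Y) Z T p"
  by (simp add: riemann_def nabla_form_def)

end

lemma curvature_pair_symmetry:
  fixes R :: "'a \<Rightarrow> 'a \<Rightarrow> 'a \<Rightarrow> 'a \<Rightarrow> real"
  assumes antisym_left: "\<And>x y z t. P x \<Longrightarrow> P y \<Longrightarrow> P z \<Longrightarrow> P t \<Longrightarrow> R x y z t = - R y x z t"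
    and antisym_right: "\<And>x y z t. P x \<Longrightarrow> P y \<Longrightarrow> P z \<Longrightarrow> P t \<Longrightarrow> R x y z t = - R x y t z"
    and bianchi: "\<And>x y z t. P x \<Longrightarrow> P y \<Longrightarrow> P z \<Longrightarrow> P t \<Longrightarrow> R y z x t + R z x y t + R x y z t = 0"
    and x: "P x" and y: "P y" and z: "P z" and t: "P t"
  shows "R x y z t = R z t x y"
  using bianchi[OF x y z t] bianchi[OF y z t x] bianchi[OF z t x y] bianchi[OF t x y z]
    antisym_left[OF z x y t] antisym_left[OF t y z x] antisym_left[OF t x z y] antisym_left[OF t x y z]
    antisym_right[OF z t x y] antisym_right[OF y t z x] antisym_right[OF y z x t]
    antisym_right[OF x t z y] antisym_right[OF x z y t] antisym_right[OF x y z t]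
  by linarith

locale radical_stationary_manifold = metric_manifold MT A g
  for MT :: "'p topology" and A :: "('p set \<times> ('p \<Rightarrow> 'e::euclidean_space)) set"
    and g :: "'p vfield \<Rightarrow> 'p vfield \<Rightarrow> 'p \<Rightarrow> real" +
  assumes radical_stationary: "radical_stationary MT A g"
begin

lemma Abullet_koszul: "vf X \<Longrightarrow> vf Y \<Longrightarrow> Abullet MT A g (koszul g X Y)"
  using radical_stationary unfolding radical_stationary_def by blast

lemma riemann_antisym_left:
  assumes X: "vf X" and Y: "vf Y" and Z: "vf Z" and T: "vf T"
  shows "riemann MT A g X Y Z T p = - riemann MT A g Y X Z T p"
  using koszul_uminus[OF vector_field_lie[OF X Y] Z T, of p]
  by (simp add: riemann_expand lie_anticomm[of Y X])

lemma vf_koszul_metric: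
  assumes V: "vf V" and X: "vf X" and Y: "vf Y" and Z: "vf Z"
  shows "V (koszul g X Y Z) p + V (koszul g X Z Y) p = V (X (g Y Z)) p"
proof -
  have "(\<lambda>p. koszul g X Y Z p + koszul g X Z Y p) = X (g Y Z)"
    using koszul_metric[OF X Y Z] by (intro ext)
  moreover have "V (\<lambda>p. koszul g X Y Z p + koszul g X Z Y p) p
      = V (koszul g X Y Z) p + V (koszul g X Z Y) p"
    using X Y Z by (simp add: vf_add[OF V] Abullet_smooth Abullet_koszul)
  ultimately show ?thesis by simp
qed

lemma riemann_antisym_right:
  assumes X: "vf X" and Y: "vf Y" and Z: "vf Z" and T: "vf T"
  shows "riemann MT A g X Y Z T p = - riemann MT A g X Y T Z p"
proof -
  have "koszul g (lie X Y) Z T p + koszul g (lie X Y) T Z p = X (Y (g Z T)) p - Y (X (g Z T)) p"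
    using koszul_metric[OF vector_field_lie[OF X Y] Z T] by (simp add: lie_def)
  then show ?thesis
    using vf_koszul_metric[OF X Y Z T, of p] vf_koszul_metric[OF Y X Z T, of p]
      bullet_inner_commute[OF Abullet_koszul[OF X Z] Abullet_koszul[OF Y T], of p]
      bullet_inner_commute[OF Abullet_koszul[OF Y Z] Abullet_koszul[OF X T], of p]
    by (simp add: riemann_expand)
qed

lemma vf_koszul_torsion:
  assumes V: "vf V" and X: "vf X" and Y: "vf Y" and Z: "vf Z"
  shows "V (koszul g X Y Z) p - V (koszul g Y X Z) p = V (g (lie X Y) Z) p"
proof -
  have "(\<lambda>p. koszul g X Y Z p - koszul g Y X Z p) = g (lie X Y) Z"
    using koszul_torsion[OF X Y Z] by (intro ext)
  moreover have "V (\<lambda>p. koszul g X Y Z p - koszul g Y X Z p) p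
      = V (koszul g X Y Z) p - V (koszul g Y X Z) p"
    using X Y Z by (simp add: vf_diff[OF V] Abullet_smooth Abullet_koszul)
  ultimately show ?thesis by simp
qed

text \<open>The terms of the cyclic sum of R in which X is the differentiating field.\<close>
lemma bianchi_summand:
  assumes X: "vf X" and Y: "vf Y" and Z: "vf Z" and T: "vf T"
  shows "X (koszul g Y Z T) p - X (koszul g Z Y T) p - koszul g (lie Y Z) X T p
     - (bullet_inner MT A g (koszul g X T) (koszul g Y Z) p
        - bullet_inner MT A g (koszul g X T) (koszul g Z Y) p)
     = g (lie X (lie Y Z)) T p"
proof -
  have W: "vf (lie Y Z)" using Y Z by (rule vector_field_lie)
  have "bullet_inner MT A g (koszul g X T) (koszul g Y Z) p
      - bullet_inner MT A g (koszul g X T) (koszul g Z Y) p = koszul g X T (lie Y Z) p"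
    using X Y Z T W koszul_torsion[OF Y Z]
    by (intro bullet_inner_diff_flat Abullet_koszul) simp_all
  moreover have "koszul g X T (lie Y Z) p + koszul g X (lie Y Z) T p = X (g (lie Y Z) T) p"
    using koszul_metric[OF X T W] g_sym[OF T W] by simp
  ultimately show ?thesis
    using vf_koszul_torsion[OF X Y Z T, of p] koszul_torsion[OF X W T, of p] by linarith
qed

lemma riemann_bianchi:
  assumes X: "vf X" and Y: "vf Y" and Z: "vf Z" and T: "vf T"
  shows "riemann MT A g Y Z X T p + riemann MT A g Z X Y T p + riemann MT A g X Y Z T p = 0"
  using bianchi_summand[OF X Y Z T, of p] bianchi_summand[OF Y Z X T, of p]
    bianchi_summand[OF Z X Y T, of p] g_jacobi[OF X Y Z T, of p]
  unfolding riemann_expand by linarith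

lemma riemann_pair_symmetric:
  assumes "vf X" and "vf Y" and "vf Z" and "vf T"
  shows "riemann MT A g X Y Z T p = riemann MT A g Z T X Y p"
  by (rule curvature_pair_symmetry[where R = "\<lambda>X Y Z T. riemann MT A g X Y Z T p" and P = vf,
        OF riemann_antisym_left riemann_antisym_right riemann_bianchi assms])

end

theorem proposition7p7:
  fixes MT :: "'p topology"
    and A :: "('p set \<times> ('p \<Rightarrow> 'e::euclidean_space)) set"
    and g :: "'p vfield \<Rightarrow> 'p vfield \<Rightarrow> 'p \<Rightarrow> real"
    and X Y Z T :: "'p vfield"
  assumes "smooth_manifold MT A"
    and "sym_bilinear_form MT A g"
    and "semi_regular MT A g"
    and "vector_field MT A X" and "vector_field MT A Y"
    and "vector_field MT A Z" and "vector_field MT A T"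
  shows "riemann MT A g X Y Z T = (\<lambda>p. - riemann MT A g Y X Z T p)
    \<and> riemann MT A g X Y Z T = (\<lambda>p. - riemann MT A g X Y T Z p)
    \<and> (\<lambda>p. riemann MT A g Y Z X T p + riemann MT A g Z X Y T p + riemann MT A g X Y Z T p)
         = (\<lambda>p. 0)
    \<and> riemann MT A g X Y Z T = riemann MT A g Z T X Y"
proof -
  interpret radical_stationary_manifold MT A g
    by unfold_locales (use assms(1-3) semi_regular_def in auto)
  show ?thesis
  proof (intro conjI ext)
    fix p
    show "riemann MT A g X Y Z T p = - riemann MT A g Y X Z T p"
      by (rule riemann_antisym_left[OF assms(4-7)])
    show "riemann MT A g X Y Z T p = - riemann MT A g X Y T Z p"
      by (rule riemann_antisym_right[OF assms(4-7)])
    show "riemann MT A g Y Z X T p + riemann MT A g Z X Y T p + riemann MT A g X Y Z T p = 0"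
      by (rule riemann_bianchi[OF assms(4-7)])
    show "riemann MT A g X Y Z T p = riemann MT A g Z T X Y p"
      by (rule riemann_pair_symmetric[OF assms(4-7)])
  qed

qed

end
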